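(* Let $n\ge 1$, let $\mathcal M$ be a doubly stochastic $n\times n$ matrix and let $\kappa\le\frac{7n-4}{8n-4}$. Then there exists a directed $(2n-1)$-regular multigraph on $[n]$ whose weak direct throughput with respect to $\mathcal M$ is at least $\kappa$.
   Context: Let $n\ge 1$ and $[n]=\{1,\dots,n\}$. Networks are finite directed multigraphs on vertex set $[n]$; self-loops and parallel arcs are allowed. A directed multigraph is directed $r$-regular if every vertex has exactly $r$ outgoing and exactly $r$ incoming arcs (a self-loop at $v$ counts as one outgoing and one incoming arc of $v$). An $n\times n$ matrix is doubly stochastic if all entries are nonnegative and every row and every column sums to $1$. In a directed $(2n-1)$-regular multigraph $G$ on $[n]$ every arc has capacity $\frac{1}{2n-1}$. $G$ directly hosts a nonnegative $n\times n$ matrix $\mathcal M'=(a'_{i,j})$ if $a'_{u,v}\le \frac{m_{u,v}}{2n-1}$ for all $u,v\in[n]$, where $m_{u,v}$ is the number of arcs from $u$ to $v$ in $G$. The weak direct throughput of $G$ with respect to a doubly stochastic $\mathcal M=(a_{i,j})$ is the largest $\eta$ such that $G$ directly hosts some matrix $\mathcal M'=(a'_{i,j})$ with $0\le a'_{i,j}\le a_{i,j}$ for all $i,j$ and $\sum_{i,j}a'_{i,j}=\eta\sum_{i,j}a_{i,j}=\eta n$. *)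

theory Defs
  imports "HOL-Analysis.Analysis"
begin

(* Matrices over [n] = {1..n} are functions nat => nat => real, only entries with
   indices in {1..n} are relevant. A directed multigraph on [n] (self-loops and
   parallel arcs allowed) is represented by its arc-multiplicity function
   m :: nat => nat => nat, where m u v is the number of arcs from u to v;
   entries outside {1..n} are required to be 0. *)

definition doubly_stochastic :: "nat \<Rightarrow> (nat \<Rightarrow> nat \<Rightarrow> real) \<Rightarrow> bool" where
  "doubly_stochastic n a \<longleftrightarrow>
     (\<forall>i\<in>{1..n}. \<forall>j\<in>{1..n}. a i j \<ge> 0) \<and>
     (\<forall>i\<in>{1..n}. (\<Sum>j=1..n. a i j) = 1) \<and>
     (\<forall>j\<in>{1..n}. (\<Sum>i=1..n. a i j) = 1)"

definition multigraph_on :: "nat \<Rightarrow> (nat \<Rightarrow> nat \<Rightarrow> nat) \<Rightarrow> bool" where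
  "multigraph_on n m \<longleftrightarrow> (\<forall>u v. (u \<notin> {1..n} \<or> v \<notin> {1..n}) \<longrightarrow> m u v = 0)"

(* directed r-regular: every vertex has out-degree r and in-degree r
   (a self-loop at v contributes 1 to both) *)
definition directed_regular :: "nat \<Rightarrow> nat \<Rightarrow> (nat \<Rightarrow> nat \<Rightarrow> nat) \<Rightarrow> bool" where
  "directed_regular n r m \<longleftrightarrow> multigraph_on n m \<and>
     (\<forall>u\<in>{1..n}. (\<Sum>v=1..n. m u v) = r) \<and>
     (\<forall>v\<in>{1..n}. (\<Sum>u=1..n. m u v) = r)"

definition directly_hosts :: "nat \<Rightarrow> (nat \<Rightarrow> nat \<Rightarrow> nat) \<Rightarrow> (nat \<Rightarrow> nat \<Rightarrow> real) \<Rightarrow> bool" where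
  "directly_hosts n m a' \<longleftrightarrow>
     (\<forall>u\<in>{1..n}. \<forall>v\<in>{1..n}. a' u v \<le> real (m u v) / (2 * real n - 1))"

definition achievable_direct :: "nat \<Rightarrow> (nat \<Rightarrow> nat \<Rightarrow> nat) \<Rightarrow> (nat \<Rightarrow> nat \<Rightarrow> real) \<Rightarrow> real \<Rightarrow> bool" where
  "achievable_direct n m a \<eta> \<longleftrightarrow>
     (\<exists>a'. (\<forall>i\<in>{1..n}. \<forall>j\<in>{1..n}. 0 \<le> a' i j \<and> a' i j \<le> a i j) \<and>
           directly_hosts n m a' \<and>
           (\<Sum>i=1..n. \<Sum>j=1..n. a' i j) = \<eta> * (\<Sum>i=1..n. \<Sum>j=1..n. a i j))"

definition weak_direct_throughput :: "nat \<Rightarrow> (nat \<Rightarrow> nat \<Rightarrow> nat) \<Rightarrow> (nat \<Rightarrow> nat \<Rightarrow> real) \<Rightarrow> real" where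
  "weak_direct_throughput n m a = Sup {\<eta>. achievable_direct n m a \<eta>}"

end

theory Submission
  imports Defs
begin

(* Scaling M by 2n - 1 gives a matrix B whose rows and columns all sum to 2n - 1, so the
   fractional part X = B - floor B has integral row and column sums.  A matrix with entries in
   [0, 1] and integral margins can be rounded to a 0/1 matrix Y with the same margins and
   <X, Y> >= <X, X>: while some entry is fractional, the fractional entries outnumber the
   independent margin constraints, so some nonzero direction with zero margins is supported on
   them; moving along it, or along its negative so that <X, .> does not decrease, until one more
   entry reaches 0 or 1 makes progress.  The multigraph with floor B + Y arcs is
   (2n - 1)-regular and directly hosts min (M, (floor B + Y) / (2n - 1)).  Entrywise
   min (b, floor b + y) >= floor b + x y, so its total is at least
   (sum B - sum (x - x^2)) / (2n - 1) >= (n (2n - 1) - n^2 / 4) / (2n - 1) = n (7n - 4) / (8n - 4). *)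

section \<open>Homogeneous linear systems\<close>

lemma pivot_extension:
  fixes l d :: "'a \<Rightarrow> real"
  assumes "finite S" "s0 \<in> S" "l s0 \<noteq> 0"
    and support: "\<forall>s. s \<notin> S - {s0} \<longrightarrow> d s = 0" and nonzero: "\<exists>s\<in>S - {s0}. d s \<noteq> 0"
    and reduced: "\<forall>k\<in>L. (\<Sum>s\<in>S - {s0}. (k s - k s0 / l s0 * l s) * d s) = 0"
  shows "\<exists>d'. (\<forall>s. s \<notin> S \<longrightarrow> d' s = 0) \<and> (\<exists>s\<in>S. d' s \<noteq> 0) \<and>
           (\<forall>k\<in>insert l L. (\<Sum>s\<in>S. k s * d' s) = 0)"
proof -
  define d' where "d' = d(s0 := - (\<Sum>t\<in>S - {s0}. l t * d t) / l s0)"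
  have pivot: "(\<Sum>s\<in>S. k s * d' s) = (\<Sum>t\<in>S - {s0}. (k t - k s0 / l s0 * l t) * d t)" for k
  proof -
    have "(\<Sum>s\<in>S. k s * d' s) =
        (\<Sum>t\<in>S - {s0}. k t * d t) - k s0 / l s0 * (\<Sum>t\<in>S - {s0}. l t * d t)"
      using assms(1,2) by (simp add: d'_def sum.remove)
    also have "\<dots> = (\<Sum>t\<in>S - {s0}. (k t - k s0 / l s0 * l t) * d t)"
      by (simp add: algebra_simps sum_subtractf sum_distrib_left)
    finally show ?thesis .
  qed
  have "(\<Sum>s\<in>S. k s * d' s) = 0" if "k \<in> insert l L" for k
  proof (cases "k = l")
    case True
    then show ?thesis
      using assms(3) unfolding pivot by simp
  next
    case False
    then show ?thesis
      using that reduced unfolding pivot by simp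
  qed
  moreover have "\<forall>s. s \<notin> S \<longrightarrow> d' s = 0" "\<exists>s\<in>S. d' s \<noteq> 0"
    using support nonzero assms(2) by (auto simp: d'_def)
  ultimately show ?thesis
    by (intro exI[of _ d']) blast
qed

lemma nontrivial_solution_underdetermined:
  fixes S :: "'a set" and L :: "('a \<Rightarrow> real) set"
  assumes "finite S" "finite L" "card L < card S"
  shows "\<exists>d. (\<forall>s. s \<notin> S \<longrightarrow> d s = 0) \<and> (\<exists>s\<in>S. d s \<noteq> 0) \<and>
             (\<forall>l\<in>L. (\<Sum>s\<in>S. l s * d s) = 0)"
  using assms
proof (induction "card L" arbitrary: L S rule: less_induct)
  case less
  show ?case
  proof (cases "L = {}")
    case True
    obtain s0 where "s0 \<in> S"
      using less.prems(3) by (metis card.empty ex_in_conv less_nat_zero_code)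
    then show ?thesis
      using True by (intro exI[of _ "\<lambda>s. of_bool (s = s0)"]) auto
  next
    case False
    then obtain l where l: "l \<in> L" by blast
    have fewer: "card (L - {l}) < card L"
      using l less.prems(2) by (rule card_Diff1_less[rotated])
    have "finite (L - {l})"
      using less.prems(2) by simp
    show ?thesis
    proof (cases "\<forall>s\<in>S. l s = 0")
      case True
      have "card (L - {l}) < card S"
        using fewer less.prems(3) by linarith
      with \<open>finite (L - {l})\<close> obtain d where "\<forall>s. s \<notin> S \<longrightarrow> d s = 0" "\<exists>s\<in>S. d s \<noteq> 0"
          "\<forall>k\<in>L - {l}. (\<Sum>s\<in>S. k s * d s) = 0"
        using less.hyps[of "L - {l}" S, OF fewer less.prems(1)] by blast
      then show ?thesis
        using True by (intro exI[of _ d]) auto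
    next
      case False
      then obtain s0 where s0: "s0 \<in> S" "l s0 \<noteq> 0" by blast
      define L' where "L' = (\<lambda>k s. k s - k s0 / l s0 * l s) ` (L - {l})"
      have L'_le: "card L' \<le> card (L - {l})"
        unfolding L'_def using \<open>finite (L - {l})\<close> by (rule card_image_le)
      then have L'_fewer: "card L' < card L"
        using fewer by linarith
      have "finite (S - {s0})" "finite L'"
        unfolding L'_def using less.prems(1) \<open>finite (L - {l})\<close> by simp_all
      moreover have "card L' < card (S - {s0})"
        using L'_le fewer less.prems(1,3) s0(1) by simp
      ultimately obtain d where d: "\<forall>s. s \<notin> S - {s0} \<longrightarrow> d s = 0"
          "\<exists>s\<in>S - {s0}. d s \<noteq> 0" "\<forall>k\<in>L'. (\<Sum>s\<in>S - {s0}. k s * d s) = 0"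
        using less.hyps[of L' "S - {s0}", OF L'_fewer] by blast
      then have "\<forall>k\<in>L - {l}. (\<Sum>s\<in>S - {s0}. (k s - k s0 / l s0 * l s) * d s) = 0"
        unfolding L'_def by simp
      from pivot_extension[OF less.prems(1) s0 d(1,2) this]
      show ?thesis
        unfolding insert_Diff[OF l] .
    qed
  qed
qed

lemma exists_step_to_boundary:
  fixes f e :: "'c \<Rightarrow> real"
  assumes "finite P" "P \<noteq> {}" "\<forall>p\<in>P. 0 < f p \<and> f p < 1 \<and> e p \<noteq> 0"
  shows "\<exists>t>0. (\<forall>p\<in>P. 0 \<le> f p + t * e p \<and> f p + t * e p \<le> 1) \<and>
               (\<exists>p\<in>P. f p + t * e p \<in> {0, 1})"
proof -
  define c where "c p = (if e p > 0 then (1 - f p) / e p else - f p / e p)" for p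
  define t where "t = Min (c ` P)"
  have c_pos: "c p > 0" if "p \<in> P" for p
    using assms(3) that by (auto simp: c_def field_simps)
  have "t \<in> c ` P"
    unfolding t_def using assms(1,2) by simp
  then obtain p0 where p0: "p0 \<in> P" "t = c p0" by blast
  have t_le: "t \<le> c p" if "p \<in> P" for p
    using assms(1) that unfolding t_def by simp
  have t_pos: "t > 0"
    using c_pos p0 by simp
  have "0 \<le> f p + t * e p \<and> f p + t * e p \<le> 1" if p: "p \<in> P" for p
  proof (cases "e p > 0")
    case True
    have "t * e p \<le> c p * e p"
      using t_le[OF p] True by (simp add: mult_right_mono)
    also have "\<dots> = 1 - f p"
      using True by (simp add: c_def)
    finally have "t * e p \<le> 1 - f p" .
    moreover have "0 < t * e p"
      using True t_pos by simp
    ultimately show ?thesis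
      using assms(3) p by fastforce
  next
    case False
    then have neg: "e p < 0"
      using assms(3) p by force
    have "- f p = c p * e p"
      using neg by (simp add: c_def)
    also have "\<dots> \<le> t * e p"
      using t_le[OF p] neg by (simp add: mult_right_mono_neg)
    finally have "- f p \<le> t * e p" .
    moreover have "t * e p < 0"
      using neg t_pos by (simp add: mult_pos_neg)
    ultimately show ?thesis
      using assms(3) p by fastforce
  qed
  moreover have "f p0 + t * e p0 \<in> {0, 1}"
    using assms(3) p0 by (auto simp: c_def)
  ultimately show ?thesis
    using t_pos p0(1) by blast
qed

section \<open>Rounding matrices with integral margins\<close>

definition fractional_entries :: "'a set \<Rightarrow> 'b set \<Rightarrow> ('a \<Rightarrow> 'b \<Rightarrow> real) \<Rightarrow> ('a \<times> 'b) set" where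
  "fractional_entries I J w = {(u, v). u \<in> I \<and> v \<in> J \<and> 0 < w u v \<and> w u v < 1}"

definition unit_bounded :: "'a set \<Rightarrow> 'b set \<Rightarrow> ('a \<Rightarrow> 'b \<Rightarrow> real) \<Rightarrow> bool" where
  "unit_bounded I J w \<longleftrightarrow> (\<forall>u\<in>I. \<forall>v\<in>J. 0 \<le> w u v \<and> w u v \<le> 1)"

definition integral_margins :: "'a set \<Rightarrow> 'b set \<Rightarrow> ('a \<Rightarrow> 'b \<Rightarrow> real) \<Rightarrow> bool" where
  "integral_margins I J w \<longleftrightarrow>
     (\<forall>u\<in>I. (\<Sum>v\<in>J. w u v) \<in> \<int>) \<and> (\<forall>v\<in>J. (\<Sum>u\<in>I. w u v) \<in> \<int>)"

definition same_margins :: "'a set \<Rightarrow> 'b set \<Rightarrow> ('a \<Rightarrow> 'b \<Rightarrow> real) \<Rightarrow> ('a \<Rightarrow> 'b \<Rightarrow> real) \<Rightarrow> bool" where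
  "same_margins I J w w' \<longleftrightarrow>
     (\<forall>u\<in>I. (\<Sum>v\<in>J. w' u v) = (\<Sum>v\<in>J. w u v)) \<and> (\<forall>v\<in>J. (\<Sum>u\<in>I. w' u v) = (\<Sum>u\<in>I. w u v))"

definition zero_margins :: "'a set \<Rightarrow> 'b set \<Rightarrow> ('a \<Rightarrow> 'b \<Rightarrow> real) \<Rightarrow> bool" where
  "zero_margins I J e \<longleftrightarrow> (\<forall>u\<in>I. (\<Sum>v\<in>J. e u v) = 0) \<and> (\<forall>v\<in>J. (\<Sum>u\<in>I. e u v) = 0)"

lemma mem_fractional_entries [simp]:
  "(u, v) \<in> fractional_entries I J w \<longleftrightarrow> u \<in> I \<and> v \<in> J \<and> 0 < w u v \<and> w u v < 1"
  by (simp add: fractional_entries_def)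

lemma fractional_entries_subset: "fractional_entries I J w \<subseteq> I \<times> J"
  by (auto simp: fractional_entries_def)

lemma finite_fractional_entries: "finite I \<Longrightarrow> finite J \<Longrightarrow> finite (fractional_entries I J w)"
  using fractional_entries_subset by (rule finite_subset) simp

lemma fractional_entries_transpose:
  "fractional_entries J I (\<lambda>v u. w u v) = prod.swap ` fractional_entries I J w"
  by (auto simp: fractional_entries_def)

lemma unit_bounded_not_fractional:
  "unit_bounded I J w \<Longrightarrow> u \<in> I \<Longrightarrow> v \<in> J \<Longrightarrow> (u, v) \<notin> fractional_entries I J w \<Longrightarrow>
    w u v = 0 \<or> w u v = 1"
  by (force simp: unit_bounded_def)

lemma fractional_row_not_single:
  assumes "finite J" "unit_bounded I J w" "u \<in> I" "(\<Sum>v\<in>J. w u v) \<in> \<int>"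
    and v0: "(u, v0) \<in> fractional_entries I J w"
  shows "\<exists>v. v \<noteq> v0 \<and> (u, v) \<in> fractional_entries I J w"
proof (rule ccontr)
  assume single: "\<nexists>v. v \<noteq> v0 \<and> (u, v) \<in> fractional_entries I J w"
  have "(\<Sum>v\<in>J - {v0}. w u v) \<in> \<int>"
  proof (rule Ints_sum)
    fix v assume "v \<in> J - {v0}"
    then have "w u v = 0 \<or> w u v = 1"
      using single unit_bounded_not_fractional[OF assms(2,3)] by blast
    then show "w u v \<in> \<int>" by auto
  qed
  moreover have "w u v0 = (\<Sum>v\<in>J. w u v) - (\<Sum>v\<in>J - {v0}. w u v)"
    using v0 assms(1) sum.remove[of J v0 "w u"] by simp
  ultimately have "w u v0 \<in> \<int>"
    using assms(4) by simp
  then show False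
    using v0 by (auto elim!: Ints_cases)
qed

lemma two_mul_card_fractional_rows_le:
  assumes "finite I" "finite J" "unit_bounded I J w" "\<forall>u\<in>I. (\<Sum>v\<in>J. w u v) \<in> \<int>"
  shows "2 * card (fst ` fractional_entries I J w) \<le> card (fractional_entries I J w)"
proof -
  define F where "F = fractional_entries I J w"
  define row where "row u = {v. (u, v) \<in> F}" for u
  have F_Sigma: "F = Sigma (fst ` F) row"
    unfolding row_def by force
  have "finite F"
    unfolding F_def using assms(1,2) by (rule finite_fractional_entries)
  have finite_row: "finite (row u)" for u
    using finite_subset[of "row u" "snd ` F"] \<open>finite F\<close> unfolding row_def by force
  have "2 \<le> card (row u)" if "u \<in> fst ` F" for u
  proof -
    obtain v0 where v0: "(u, v0) \<in> F"
      using \<open>u \<in> fst ` F\<close> by force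
    then obtain v where "v \<noteq> v0" "(u, v) \<in> F"
      using fractional_row_not_single[OF assms(2,3)] assms(4) unfolding F_def by force
    then show ?thesis
      using v0 finite_row card_mono[of "row u" "{v, v0}"] unfolding row_def by auto
  qed
  then have "(\<Sum>u\<in>fst ` F. 2) \<le> (\<Sum>u\<in>fst ` F. card (row u))"
    by (rule sum_mono)
  then have "2 * card (fst ` F) \<le> (\<Sum>u\<in>fst ` F. card (row u))"
    by (simp add: mult.commute)
  also have "\<dots> = card F"
    using \<open>finite F\<close> finite_row by (subst (2) F_Sigma) simp
  finally show ?thesis
    unfolding F_def .
qed

lemma zero_margins_if_all_but_one_column:
  assumes "finite I" "finite J" "v0 \<in> J"
    and rows: "\<forall>u\<in>I. (\<Sum>v\<in>J. e u v) = 0" and cols: "\<forall>v\<in>J - {v0}. (\<Sum>u\<in>I. e u v) = 0"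
  shows "zero_margins I J e"
proof -
  have "(\<Sum>u\<in>I. e u v0) = (\<Sum>v\<in>J. \<Sum>u\<in>I. e u v) - (\<Sum>v\<in>J - {v0}. \<Sum>u\<in>I. e u v)"
    using assms(2,3) by (simp add: sum.remove)
  also have "(\<Sum>v\<in>J. \<Sum>u\<in>I. e u v) = (\<Sum>u\<in>I. \<Sum>v\<in>J. e u v)"
    by (rule sum.swap)
  also have "\<dots> - (\<Sum>v\<in>J - {v0}. \<Sum>u\<in>I. e u v) = 0"
    using rows cols by simp
  finally show ?thesis
    using rows cols unfolding zero_margins_def by blast
qed

lemma sum_over_support_Times:
  fixes d :: "'a \<times> 'b \<Rightarrow> real"
  assumes "finite I" "finite J" "F \<subseteq> I \<times> J" "\<forall>p. p \<notin> F \<longrightarrow> d p = 0"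
  shows "(\<Sum>p\<in>F. g p * d p) = (\<Sum>u\<in>I. \<Sum>v\<in>J. g (u, v) * d (u, v))"
proof -
  have "(\<Sum>p\<in>F. g p * d p) = (\<Sum>p\<in>I \<times> J. g p * d p)"
    using assms by (intro sum.mono_neutral_left) auto
  then show ?thesis
    by (simp add: sum.cartesian_product)
qed

lemma card_fractional_rows_add_cols_le:
  assumes "finite I" "finite J" "unit_bounded I J w" "integral_margins I J w"
  shows "card (fst ` fractional_entries I J w) + card (snd ` fractional_entries I J w)
           \<le> card (fractional_entries I J w)"
proof -
  define F where "F = fractional_entries I J w"
  have rows: "2 * card (fst ` F) \<le> card F"
    unfolding F_def using assms
    by (intro two_mul_card_fractional_rows_le) (auto simp: integral_margins_def)
  have "fractional_entries J I (\<lambda>v u. w u v) = prod.swap ` F"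
    unfolding F_def by (rule fractional_entries_transpose)
  then have "2 * card (fst ` prod.swap ` F) \<le> card (prod.swap ` F)"
    using two_mul_card_fractional_rows_le[of J I "\<lambda>v u. w u v"] assms
    by (auto simp: integral_margins_def unit_bounded_def)
  moreover have "card (prod.swap ` F) = card F"
    by (rule card_image) simp
  moreover have "fst ` prod.swap ` F = snd ` F"
    by force
  ultimately have "2 * card (snd ` F) \<le> card F"
    by simp
  with rows show ?thesis
    unfolding F_def by linarith
qed

lemma sum_of_bool_mult_eq_0:
  fixes d :: "'a \<Rightarrow> real"
  assumes "c \<notin> f ` F"
  shows "(\<Sum>p\<in>F. of_bool (f p = c) * d p) = 0"
proof (rule sum.neutral, intro ballI)
  fix p assume "p \<in> F"
  then have "f p \<noteq> c"
    using assms by blast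
  then show "of_bool (f p = c) * d p = 0"
    by simp
qed

(* The constraint of column v0 is left out, so that there are fewer constraints than unknowns;
   it follows from the others. *)
lemma exists_nonzero_line_balanced:
  fixes F :: "('a \<times> 'b) set"
  assumes "finite F" "card (fst ` F) + card (snd ` F) \<le> card F" "v0 \<in> snd ` F"
  shows "\<exists>d :: 'a \<times> 'b \<Rightarrow> real. (\<forall>p. p \<notin> F \<longrightarrow> d p = 0) \<and> (\<exists>p\<in>F. d p \<noteq> 0) \<and>
             (\<forall>u. (\<Sum>p\<in>F. of_bool (fst p = u) * d p) = 0) \<and>
             (\<forall>v. v \<noteq> v0 \<longrightarrow> (\<Sum>p\<in>F. of_bool (snd p = v) * d p) = 0)"
proof -
  define row where "row u p = (of_bool (fst p = u) :: real)" for u and p :: "'a \<times> 'b"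
  define col where "col v p = (of_bool (snd p = v) :: real)" for v and p :: "'a \<times> 'b"
  define L where "L = row ` fst ` F \<union> col ` (snd ` F - {v0})"
  have "finite L"
    unfolding L_def using assms(1) by simp
  have "card L \<le> card (fst ` F) + card (snd ` F - {v0})"
    unfolding L_def by (rule order.trans[OF card_Un_le add_mono[OF card_image_le card_image_le]])
      (use assms(1) in auto)
  also have "\<dots> < card F"
  proof -
    have "card (snd ` F) > 0"
      using assms(1,3) card_gt_0_iff by blast
    then show ?thesis
      using assms by simp
  qed
  finally obtain d :: "'a \<times> 'b \<Rightarrow> real" where d: "\<forall>p. p \<notin> F \<longrightarrow> d p = 0" "\<exists>p\<in>F. d p \<noteq> 0"
      "\<forall>l\<in>L. (\<Sum>p\<in>F. l p * d p) = 0"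
    using nontrivial_solution_underdetermined[OF assms(1) \<open>finite L\<close>] by blast
  have "(\<Sum>p\<in>F. of_bool (fst p = u) * d p) = 0" for u
  proof (cases "u \<in> fst ` F")
    case True
    then have "row u \<in> L"
      unfolding L_def by blast
    from bspec[OF d(3) this] show ?thesis
      unfolding row_def by simp
  qed (rule sum_of_bool_mult_eq_0)
  moreover have "(\<Sum>p\<in>F. of_bool (snd p = v) * d p) = 0" if "v \<noteq> v0" for v
  proof (cases "v \<in> snd ` F")
    case True
    then have "col v \<in> L"
      using that unfolding L_def by blast
    from bspec[OF d(3) this] show ?thesis
      unfolding col_def by simp
  qed (rule sum_of_bool_mult_eq_0)
  ultimately show ?thesis
    using d(1,2) by (intro exI[of _ d]) blast
qed

lemma exists_balanced_direction:
  assumes "finite I" "finite J" "unit_bounded I J w" "integral_margins I J w"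
    and nonempty: "fractional_entries I J w \<noteq> {}"
  shows "\<exists>e. (\<forall>u v. (u, v) \<notin> fractional_entries I J w \<longrightarrow> e u v = 0) \<and>
             (\<exists>(u, v) \<in> fractional_entries I J w. e u v \<noteq> 0) \<and> zero_margins I J e"
proof -
  define F where "F = fractional_entries I J w"
  have "finite F" "F \<subseteq> I \<times> J"
    unfolding F_def using assms(1,2) finite_fractional_entries fractional_entries_subset by auto
  obtain v0 where v0: "v0 \<in> snd ` F"
    using nonempty unfolding F_def by blast
  obtain d :: "'a \<times> 'b \<Rightarrow> real" where d: "\<forall>p. p \<notin> F \<longrightarrow> d p = 0" "\<exists>p\<in>F. d p \<noteq> 0"
      "\<forall>u. (\<Sum>p\<in>F. of_bool (fst p = u) * d p) = 0"
      "\<forall>v. v \<noteq> v0 \<longrightarrow> (\<Sum>p\<in>F. of_bool (snd p = v) * d p) = 0"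
    using exists_nonzero_line_balanced[OF \<open>finite F\<close> _ v0]
      card_fractional_rows_add_cols_le[OF assms(1-4)] unfolding F_def by blast
  define e where "e u v = d (u, v)" for u v
  note sum_F = sum_over_support_Times[OF assms(1,2) \<open>F \<subseteq> I \<times> J\<close> d(1), unfolded e_def[symmetric]]
  have "(\<Sum>v\<in>J. e u v) = 0" if "u \<in> I" for u
    using spec[OF d(3), of u] that assms(1,2) unfolding sum_F by (simp add: sum_distrib_left[symmetric])
  moreover have "(\<Sum>u\<in>I. e u v) = 0" if "v \<in> J - {v0}" for v
    using spec[OF d(4), of v] that assms(1,2) unfolding sum_F by simp
  moreover have "v0 \<in> J"
    using v0 \<open>F \<subseteq> I \<times> J\<close> mem_Times_iff by blast
  ultimately have "zero_margins I J e"
    using zero_margins_if_all_but_one_column[OF assms(1,2)] by blast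
  moreover have "\<exists>(u, v) \<in> F. e u v \<noteq> 0"
    using d(2) unfolding e_def by auto
  moreover have "\<forall>u v. (u, v) \<notin> F \<longrightarrow> e u v = 0"
    using d(1) unfolding e_def by blast
  ultimately show ?thesis
    unfolding F_def by blast
qed

lemma exists_balanced_direction_nonneg_gain:
  fixes g w :: "'a \<Rightarrow> 'b \<Rightarrow> real"
  assumes "finite I" "finite J" "unit_bounded I J w" "integral_margins I J w"
    and "fractional_entries I J w \<noteq> {}"
  shows "\<exists>e. (\<forall>u v. (u, v) \<notin> fractional_entries I J w \<longrightarrow> e u v = 0) \<and>
             (\<exists>(u, v) \<in> fractional_entries I J w. e u v \<noteq> 0) \<and> zero_margins I J e \<and>
             0 \<le> (\<Sum>u\<in>I. \<Sum>v\<in>J. g u v * e u v)"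
proof -
  obtain d where d: "\<forall>u v. (u, v) \<notin> fractional_entries I J w \<longrightarrow> d u v = 0"
      "\<exists>(u, v) \<in> fractional_entries I J w. d u v \<noteq> 0" "zero_margins I J d"
    using exists_balanced_direction[OF assms] by blast
  show ?thesis
  proof (cases "0 \<le> (\<Sum>u\<in>I. \<Sum>v\<in>J. g u v * d u v)")
    case True
    then show ?thesis
      using d by (intro exI[of _ d]) simp
  next
    case False
    then show ?thesis
      using d by (intro exI[of _ "\<lambda>u v. - d u v"]) (auto simp: zero_margins_def sum_negf)
  qed
qed

lemma fractional_entries_subset_if_agree_outside:
  assumes "\<forall>u v. (u, v) \<notin> fractional_entries I J w \<longrightarrow> w' u v = w u v"
  shows "fractional_entries I J w' \<subseteq> fractional_entries I J w"
proof (rule subrelI)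
  fix u v assume uv: "(u, v) \<in> fractional_entries I J w'"
  show "(u, v) \<in> fractional_entries I J w"
  proof (rule ccontr)
    assume outside: "(u, v) \<notin> fractional_entries I J w"
    then have "w' u v = w u v"
      using assms by blast
    with uv outside show False
      by simp
  qed
qed

lemma exists_step_along_direction:
  fixes w e :: "'a \<Rightarrow> 'b \<Rightarrow> real"
  assumes "finite I" "finite J" "unit_bounded I J w"
    and support: "\<forall>u v. (u, v) \<notin> fractional_entries I J w \<longrightarrow> e u v = 0"
    and nonzero: "\<exists>(u, v) \<in> fractional_entries I J w. e u v \<noteq> 0"
  shows "\<exists>t>0. unit_bounded I J (\<lambda>u v. w u v + t * e u v) \<and>
               fractional_entries I J (\<lambda>u v. w u v + t * e u v) \<subset> fractional_entries I J w"
proof -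
  define F where "F = fractional_entries I J w"
  define P where "P = {(u, v) \<in> F. e u v \<noteq> 0}"
  have "finite P"
    unfolding P_def F_def using assms(1,2) finite_fractional_entries by (auto intro: finite_subset)
  moreover have "P \<noteq> {}"
    using nonzero unfolding P_def F_def by blast
  moreover have "\<forall>p\<in>P. 0 < case_prod w p \<and> case_prod w p < 1 \<and> case_prod e p \<noteq> 0"
    unfolding P_def F_def by auto
  ultimately obtain t where t: "t > 0"
      "\<forall>p\<in>P. 0 \<le> case_prod w p + t * case_prod e p \<and> case_prod w p + t * case_prod e p \<le> 1"
      "\<exists>p\<in>P. case_prod w p + t * case_prod e p \<in> {0, 1}"
    by (blast dest: exists_step_to_boundary)
  define w' where "w' = (\<lambda>u v. w u v + t * e u v)"
  have "unit_bounded I J w'"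
    unfolding unit_bounded_def
  proof (intro ballI)
    fix u v assume "u \<in> I" "v \<in> J"
    moreover have "e u v = 0" if "(u, v) \<notin> P"
      using that support unfolding P_def F_def by auto
    ultimately show "0 \<le> w' u v \<and> w' u v \<le> 1"
      using bspec[OF t(2), of "(u, v)"] assms(3) unfolding unit_bounded_def w'_def
      by (cases "(u, v) \<in> P") auto
  qed
  moreover have "fractional_entries I J w' \<subseteq> F"
    unfolding F_def using support by (intro fractional_entries_subset_if_agree_outside) (simp add: w'_def)
  moreover obtain u v where "(u, v) \<in> F" "(u, v) \<notin> fractional_entries I J w'"
    using t(3) unfolding P_def w'_def by auto
  ultimately have "unit_bounded I J w' \<and> fractional_entries I J w' \<subset> F"
    by blast
  then show ?thesis
    using t(1) unfolding w'_def F_def by (intro exI[of _ t]) simp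
qed

lemma rounding_step:
  fixes g w :: "'a \<Rightarrow> 'b \<Rightarrow> real"
  assumes "finite I" "finite J" "unit_bounded I J w" "integral_margins I J w"
    and "fractional_entries I J w \<noteq> {}"
  shows "\<exists>w'. unit_bounded I J w' \<and> same_margins I J w w' \<and>
              fractional_entries I J w' \<subset> fractional_entries I J w \<and>
              (\<Sum>u\<in>I. \<Sum>v\<in>J. g u v * w u v) \<le> (\<Sum>u\<in>I. \<Sum>v\<in>J. g u v * w' u v)"
proof -
  obtain e where e: "\<forall>u v. (u, v) \<notin> fractional_entries I J w \<longrightarrow> e u v = 0"
      "\<exists>(u, v) \<in> fractional_entries I J w. e u v \<noteq> 0" "zero_margins I J e"
      "0 \<le> (\<Sum>u\<in>I. \<Sum>v\<in>J. g u v * e u v)"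
    using exists_balanced_direction_nonneg_gain[OF assms] by blast
  obtain t where t: "t > 0" "unit_bounded I J (\<lambda>u v. w u v + t * e u v)"
      "fractional_entries I J (\<lambda>u v. w u v + t * e u v) \<subset> fractional_entries I J w"
    using exists_step_along_direction[OF assms(1-3) e(1,2)] by blast
  have "same_margins I J w (\<lambda>u v. w u v + t * e u v)"
    using e(3) unfolding same_margins_def zero_margins_def
    by (simp add: sum.distrib sum_distrib_left[symmetric])
  moreover have "(\<Sum>u\<in>I. \<Sum>v\<in>J. g u v * (w u v + t * e u v)) =
      (\<Sum>u\<in>I. \<Sum>v\<in>J. g u v * w u v) + t * (\<Sum>u\<in>I. \<Sum>v\<in>J. g u v * e u v)"
    by (simp add: algebra_simps sum.distrib sum_distrib_left)
  ultimately show ?thesis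
    using t e(4) by (intro exI[of _ "\<lambda>u v. w u v + t * e u v"]) simp
qed

lemma exists_01_rounding:
  fixes g w :: "'a \<Rightarrow> 'b \<Rightarrow> real"
  assumes "finite I" "finite J" "unit_bounded I J w" "integral_margins I J w"
  shows "\<exists>y. (\<forall>u\<in>I. \<forall>v\<in>J. y u v \<in> {0, 1}) \<and> same_margins I J w y \<and>
             (\<Sum>u\<in>I. \<Sum>v\<in>J. g u v * w u v) \<le> (\<Sum>u\<in>I. \<Sum>v\<in>J. g u v * y u v)"
  using assms(3,4)
proof (induction "card (fractional_entries I J w)" arbitrary: w rule: less_induct)
  case less
  show ?case
  proof (cases "fractional_entries I J w = {}")
    case True
    then have "\<forall>u\<in>I. \<forall>v\<in>J. w u v \<in> {0, 1}"
      using unit_bounded_not_fractional[OF less.prems(1)] by blast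
    then show ?thesis
      by (intro exI[of _ w]) (simp add: same_margins_def)
  next
    case False
    obtain w' where w': "unit_bounded I J w'" "same_margins I J w w'"
        "fractional_entries I J w' \<subset> fractional_entries I J w"
        "(\<Sum>u\<in>I. \<Sum>v\<in>J. g u v * w u v) \<le> (\<Sum>u\<in>I. \<Sum>v\<in>J. g u v * w' u v)"
      using rounding_step[OF assms(1,2) less.prems False] by blast
    have "card (fractional_entries I J w') < card (fractional_entries I J w)"
      using w'(3) assms(1,2) by (simp add: psubset_card_mono finite_fractional_entries)
    moreover have "integral_margins I J w'"
      using less.prems(2) w'(2) by (simp add: integral_margins_def same_margins_def)
    ultimately obtain y where "\<forall>u\<in>I. \<forall>v\<in>J. y u v \<in> {0, 1}" "same_margins I J w' y"
        "(\<Sum>u\<in>I. \<Sum>v\<in>J. g u v * w' u v) \<le> (\<Sum>u\<in>I. \<Sum>v\<in>J. g u v * y u v)"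
      using less.hyps w'(1) by blast
    then show ?thesis
      using w'(2,4) by (intro exI[of _ y]) (auto simp: same_margins_def)
  qed
qed

section \<open>Regular multigraphs and direct throughput\<close>

lemma floor_add_frac_mult_le_min:
  fixes b y :: real
  assumes "y \<in> {0, 1}"
  shows "of_int \<lfloor>b\<rfloor> + frac b * y \<le> min b (of_int \<lfloor>b\<rfloor> + y)"
  using assms frac_lt_1[of b] by (auto simp: frac_def)

lemma sum_floor_add_eq_sum:
  fixes b y :: "'a \<Rightarrow> real"
  assumes "(\<Sum>v\<in>J. y v) = (\<Sum>v\<in>J. frac (b v))"
  shows "(\<Sum>v\<in>J. of_int \<lfloor>b v\<rfloor> + y v) = (\<Sum>v\<in>J. b v)"
  using assms by (simp add: sum.distrib frac_def sum_subtractf)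

lemma sum_min_floor_add_rounding_ge:
  fixes b y :: "'a \<Rightarrow> 'b \<Rightarrow> real"
  assumes y01: "\<forall>u\<in>I. \<forall>v\<in>J. y u v \<in> {0, 1}"
    and gain: "(\<Sum>u\<in>I. \<Sum>v\<in>J. frac (b u v) * frac (b u v)) \<le> (\<Sum>u\<in>I. \<Sum>v\<in>J. frac (b u v) * y u v)"
  shows "(\<Sum>u\<in>I. \<Sum>v\<in>J. b u v) - real (card I * card J) / 4
           \<le> (\<Sum>u\<in>I. \<Sum>v\<in>J. min (b u v) (of_int \<lfloor>b u v\<rfloor> + y u v))"
proof -
  have quarter: "frac (b u v) - frac (b u v) * frac (b u v) \<le> 1 / 4" for u v
    using zero_le_power2[of "frac (b u v) - 1 / 2"] by (simp add: power2_eq_square algebra_simps)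
  have "(\<Sum>u\<in>I. \<Sum>v\<in>J. b u v) - real (card I * card J) / 4
      = (\<Sum>u\<in>I. \<Sum>v\<in>J. b u v) - (\<Sum>u\<in>I. \<Sum>v\<in>J. 1 / 4)"
    by simp
  also have "\<dots> \<le> (\<Sum>u\<in>I. \<Sum>v\<in>J. b u v) -
      (\<Sum>u\<in>I. \<Sum>v\<in>J. frac (b u v) - frac (b u v) * frac (b u v))"
    by (intro diff_left_mono sum_mono quarter)
  also have "\<dots> \<le> (\<Sum>u\<in>I. \<Sum>v\<in>J. of_int \<lfloor>b u v\<rfloor> + frac (b u v) * y u v)"
    using gain by (simp add: frac_def sum.distrib sum_subtractf)
  also have "\<dots> \<le> (\<Sum>u\<in>I. \<Sum>v\<in>J. min (b u v) (of_int \<lfloor>b u v\<rfloor> + y u v))"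
  proof (intro sum_mono)
    fix u v assume "u \<in> I" "v \<in> J"
    then show "of_int \<lfloor>b u v\<rfloor> + frac (b u v) * y u v \<le> min (b u v) (of_int \<lfloor>b u v\<rfloor> + y u v)"
      using y01 floor_add_frac_mult_le_min[of "y u v" "b u v"] by simp
  qed
  finally show ?thesis .
qed

lemma exists_integral_rounding:
  fixes b :: "'a \<Rightarrow> 'b \<Rightarrow> real"
  assumes "finite I" "finite J" "integral_margins I J b"
  shows "\<exists>r. (\<forall>u\<in>I. \<forall>v\<in>J. r u v \<in> \<int> \<and> of_int \<lfloor>b u v\<rfloor> \<le> r u v) \<and> same_margins I J b r \<and>
             (\<Sum>u\<in>I. \<Sum>v\<in>J. b u v) - real (card I * card J) / 4
               \<le> (\<Sum>u\<in>I. \<Sum>v\<in>J. min (b u v) (r u v))"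
proof -
  define x where "x u v = frac (b u v)" for u v
  have "unit_bounded I J x"
    unfolding unit_bounded_def x_def by (simp add: frac_lt_1 less_imp_le)
  moreover have "integral_margins I J x"
    using assms(3) by (simp add: integral_margins_def x_def frac_def sum_subtractf Ints_sum)
  ultimately obtain y where y01: "\<forall>u\<in>I. \<forall>v\<in>J. y u v \<in> {0, 1}"
      and y_margins: "same_margins I J x y"
      and y_gain: "(\<Sum>u\<in>I. \<Sum>v\<in>J. x u v * x u v) \<le> (\<Sum>u\<in>I. \<Sum>v\<in>J. x u v * y u v)"
    using exists_01_rounding[OF assms(1,2), of x x] by blast
  define r where "r u v = of_int \<lfloor>b u v\<rfloor> + y u v" for u v
  have "\<forall>u\<in>I. \<forall>v\<in>J. r u v \<in> \<int> \<and> of_int \<lfloor>b u v\<rfloor> \<le> r u v"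
  proof (intro ballI)
    fix u v assume "u \<in> I" "v \<in> J"
    then have "y u v = 0 \<or> y u v = 1"
      using y01 by simp
    then show "r u v \<in> \<int> \<and> of_int \<lfloor>b u v\<rfloor> \<le> r u v"
      by (elim disjE) (simp_all add: r_def)
  qed
  moreover have "same_margins I J b r"
    using y_margins unfolding same_margins_def r_def x_def by (simp add: sum_floor_add_eq_sum)
  moreover have "(\<Sum>u\<in>I. \<Sum>v\<in>J. b u v) - real (card I * card J) / 4
      \<le> (\<Sum>u\<in>I. \<Sum>v\<in>J. min (b u v) (r u v))"
    unfolding r_def using y01 y_gain unfolding x_def by (rule sum_min_floor_add_rounding_ge)
  ultimately show ?thesis
    by (intro exI[of _ r]) simp
qed

lemma directed_regular_if_real_sums:
  assumes "multigraph_on n m"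
    and "\<forall>u\<in>{1..n}. (\<Sum>v=1..n. real (m u v)) = real r"
    and "\<forall>v\<in>{1..n}. (\<Sum>u=1..n. real (m u v)) = real r"
  shows "directed_regular n r m"
  using assms unfolding directed_regular_def by (simp flip: of_nat_sum)

lemma exists_regular_multigraph_hosting:
  fixes a :: "nat \<Rightarrow> nat \<Rightarrow> real"
  assumes "n \<ge> 1" "doubly_stochastic n a"
  defines "N \<equiv> 2 * real n - 1"
  shows "\<exists>m. directed_regular n (2 * n - 1) m \<and>
           real n * N - real n ^ 2 / 4 \<le> (\<Sum>u=1..n. \<Sum>v=1..n. min (N * a u v) (real (m u v)))"
proof -
  define b where "b u v = N * a u v" for u v
  have N_nat: "N = real (2 * n - 1)"
    using assms(1) by (simp add: N_def)
  have b_nonneg: "0 \<le> b u v" if "u \<in> {1..n}" "v \<in> {1..n}" for u v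
    using assms(1,2) that unfolding b_def N_def doubly_stochastic_def by simp
  have b_rows: "(\<Sum>v=1..n. b u v) = N" if "u \<in> {1..n}" for u
    using assms(2) that unfolding b_def doubly_stochastic_def by (simp add: sum_distrib_left[symmetric])
  have b_cols: "(\<Sum>u=1..n. b u v) = N" if "v \<in> {1..n}" for v
    using assms(2) that unfolding b_def doubly_stochastic_def by (simp add: sum_distrib_left[symmetric])
  have "integral_margins {1..n} {1..n} b"
    using b_rows b_cols N_nat by (simp add: integral_margins_def)
  then obtain r where r: "\<forall>u\<in>{1..n}. \<forall>v\<in>{1..n}. r u v \<in> \<int> \<and> of_int \<lfloor>b u v\<rfloor> \<le> r u v"
      and r_margins: "same_margins {1..n} {1..n} b r"
      and r_bound: "(\<Sum>u=1..n. \<Sum>v=1..n. b u v) - real (card {1..n} * card {1..n}) / 4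
                      \<le> (\<Sum>u=1..n. \<Sum>v=1..n. min (b u v) (r u v))"
    using exists_integral_rounding[of "{1..n}" "{1..n}" b] by auto
  define m where "m u v = (if u \<in> {1..n} \<and> v \<in> {1..n} then nat \<lfloor>r u v\<rfloor> else 0)" for u v
  have m_real: "real (m u v) = r u v" if "u \<in> {1..n}" "v \<in> {1..n}" for u v
  proof -
    have "r u v \<in> \<int>" "of_int \<lfloor>b u v\<rfloor> \<le> r u v"
      using r that by auto
    then obtain k where k: "r u v = of_int k" "\<lfloor>b u v\<rfloor> \<le> k"
      by (metis Ints_cases of_int_le_iff)
    have "0 \<le> \<lfloor>b u v\<rfloor>"
      using b_nonneg[OF that] by simp
    then have "0 \<le> k"
      using k(2) by (rule order.trans)
    then show ?thesis
      using that k(1) by (simp add: m_def)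
  qed
  have "\<forall>u\<in>{1..n}. (\<Sum>v=1..n. real (m u v)) = real (2 * n - 1)"
    using r_margins b_rows m_real unfolding same_margins_def N_nat by simp
  moreover have "\<forall>v\<in>{1..n}. (\<Sum>u=1..n. real (m u v)) = real (2 * n - 1)"
    using r_margins b_cols m_real unfolding same_margins_def N_nat by simp
  ultimately have "directed_regular n (2 * n - 1) m"
    by (intro directed_regular_if_real_sums) (auto simp: multigraph_on_def m_def)
  moreover have "(\<Sum>u=1..n. \<Sum>v=1..n. b u v) = real n * N"
    using b_rows by simp
  ultimately show ?thesis
    using r_bound m_real unfolding b_def by (intro exI[of _ m]) (simp add: power2_eq_square)
qed

lemma achievable_direct_le_one:
  assumes "n \<ge> 1" "doubly_stochastic n a" "achievable_direct n m a \<eta>"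
  shows "\<eta> \<le> 1"
proof -
  obtain a' where a': "\<forall>i\<in>{1..n}. \<forall>j\<in>{1..n}. 0 \<le> a' i j \<and> a' i j \<le> a i j"
      "(\<Sum>i=1..n. \<Sum>j=1..n. a' i j) = \<eta> * (\<Sum>i=1..n. \<Sum>j=1..n. a i j)"
    using assms(3) unfolding achievable_direct_def by blast
  have total: "(\<Sum>i=1..n. \<Sum>j=1..n. a i j) = real n"
    using assms(2) unfolding doubly_stochastic_def by simp
  have "(\<Sum>i=1..n. \<Sum>j=1..n. a' i j) \<le> (\<Sum>i=1..n. \<Sum>j=1..n. a i j)"
    using a'(1) by (intro sum_mono) auto
  then show ?thesis
    using a'(2) total assms(1) by simp
qed

lemma weak_direct_throughput_ge:
  assumes "n \<ge> 1" "doubly_stochastic n a"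
  shows "(\<Sum>u=1..n. \<Sum>v=1..n. min (a u v) (real (m u v) / (2 * real n - 1))) / real n
           \<le> weak_direct_throughput n m a"
  unfolding weak_direct_throughput_def
proof (rule cSup_upper)
  show "bdd_above {\<eta>. achievable_direct n m a \<eta>}"
    using achievable_direct_le_one[OF assms] by (intro bdd_aboveI[where M = 1]) blast
  have "(\<Sum>i=1..n. \<Sum>j=1..n. a i j) = real n"
    using assms(2) unfolding doubly_stochastic_def by simp
  then show "(\<Sum>u=1..n. \<Sum>v=1..n. min (a u v) (real (m u v) / (2 * real n - 1))) / real n
               \<in> {\<eta>. achievable_direct n m a \<eta>}"
    using assms unfolding achievable_direct_def directly_hosts_def doubly_stochastic_def
    by (intro CollectI exI[of _ "\<lambda>u v. min (a u v) (real (m u v) / (2 * real n - 1))"]) auto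
qed

theorem theorem4p3:
  fixes n :: nat and a :: "nat \<Rightarrow> nat \<Rightarrow> real" and \<kappa> :: real
  assumes "n \<ge> 1"
    and "doubly_stochastic n a"
    and "\<kappa> \<le> (7 * real n - 4) / (8 * real n - 4)"
  shows "\<exists>m. directed_regular n (2 * n - 1) m \<and> weak_direct_throughput n m a \<ge> \<kappa>"
proof -
  define N where "N = 2 * real n - 1"
  obtain m where regular: "directed_regular n (2 * n - 1) m"
    and hosted: "real n * N - real n ^ 2 / 4 \<le> (\<Sum>u=1..n. \<Sum>v=1..n. min (N * a u v) (real (m u v)))"
    using exists_regular_multigraph_hosting[OF assms(1,2)] unfolding N_def by blast
  define S where "S = (\<Sum>u=1..n. \<Sum>v=1..n. min (a u v) (real (m u v) / N))"
  have "N \<ge> 1"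
    using assms(1) by (simp add: N_def)
  then have "(\<Sum>u=1..n. \<Sum>v=1..n. min (N * a u v) (real (m u v))) = N * S"
    by (simp add: S_def sum_distrib_left min_mult_distrib_left)
  then have "(7 * real n - 4) * real n \<le> S * (8 * real n - 4)"
    using hosted unfolding N_def by (simp add: algebra_simps power2_eq_square)
  then have "(7 * real n - 4) / (8 * real n - 4) \<le> S / real n"
    using assms(1) by (simp add: divide_le_eq le_divide_eq mult.commute)
  also have "\<dots> \<le> weak_direct_throughput n m a"
    using weak_direct_throughput_ge[OF assms(1,2)] unfolding S_def N_def .
  finally show ?thesis
    using regular assms(3) by auto
qed

end
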